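(* For every $n\geq1$ and every divisor $d$ of $2n$, $$\mathrm{orb}_d(n)=\begin{cases}\mathrm{orb}_1(n/d), & d \text{ odd},\\ \mathrm{orb}_2(2n/d), & d\text{ even}.\end{cases}$$
   Context: For an integer $n\geq1$ let $V_n=\{v_0,\dots,v_{n-1}\}$, indices modulo $n$. The dihedral group $D_{2n}=\{1,\sigma,\dots,\sigma^{n-1},\tau,\sigma\tau,\dots,\sigma^{n-1}\tau\}$ acts on subsets of $V_n$ elementwise, with $\sigma(v_i)=v_{i+1}$, $\tau(v_i)=v_{n-i}$. Let $\mathbf{X}_n$ be the family of subsets $X\subseteq V_n$ such that (a) there is no $i\in\mathbb{Z}_n$ with $v_i,v_{i+1}\in X$, and (b) for every $i\in\mathbb{Z}_n$ at least one of $v_i,v_{i+1},v_{i+2}$ lies in $X$ (for $n\geq3$ these are exactly the maximal independent sets of the cycle graph $C_n$ with edges $v_iv_{i+1}$). $\mathbf{X}_n$ is invariant under $D_{2n}$. For $d\mid 2n$, $\mathrm{orb}_d(n)$ denotes the number of $D_{2n}$-orbits of $\mathbf{X}_n$ of cardinality $2n/d$ (equivalently, whose elements have stabilizer of order $d$). *)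

theory Defs
  imports Main
begin

text \<open>Vertices v_0..v_{n-1} are represented by the naturals 0..<n (indices mod n).\<close>

definition Xn :: "nat \<Rightarrow> nat set set" where
  "Xn n = {X. X \<subseteq> {..<n}
     \<and> (\<forall>i<n. \<not> (i \<in> X \<and> (i + 1) mod n \<in> X))
     \<and> (\<forall>i<n. i \<in> X \<or> (i + 1) mod n \<in> X \<or> (i + 2) mod n \<in> X)}"

text \<open>The dihedral group D_{2n} as the 2n abstract elements (k, b), k < n:
  (k, False) is sigma^k, (k, True) is sigma^k tau, which maps v_i to v_{k-i}.\<close>

definition dih :: "nat \<Rightarrow> (nat \<times> bool) set" where
  "dih n = {..<n} \<times> UNIV"

definition dih_act :: "nat \<Rightarrow> nat \<times> bool \<Rightarrow> nat set \<Rightarrow> nat set" where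
  "dih_act n g X = (\<lambda>i. if snd g then (fst g + n - i) mod n else (i + fst g) mod n) ` X"

definition dih_orbit :: "nat \<Rightarrow> nat set \<Rightarrow> nat set set" where
  "dih_orbit n X = (\<lambda>g. dih_act n g X) ` dih n"

definition orbits :: "nat \<Rightarrow> nat set set set" where
  "orbits n = dih_orbit n ` Xn n"

definition orb :: "nat \<Rightarrow> nat \<Rightarrow> nat" where
  "orb d n = card {Y \<in> orbits n. card Y = 2 * n div d}"

end

theory Submission
  imports Defs
begin

(* The D_{2n}-orbit of a set X is the union of the rotation orbits of X and of its mirror image.
   Both have as many elements as the least rotation period r of X, a divisor of n, and they are
   equal or disjoint; so the orbit has r or 2r elements.  Hence the sets in an orbit of size 2n/d
   have period m = n/d if d is odd (period 2n/d would force d to be even) and m = 2n/d if d is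
   even.  Sets of period m are the m-periodic extensions of subsets of Z_m; this extension
   preserves maximal independence and commutes with the dihedral actions, so it maps the orbits
   of X_m bijectively and size-preservingly onto the orbits of m-periodic sets in X_n. *)

lemma neg_neg_mod: "i < n \<Longrightarrow> (n - (n - i) mod n) mod (n::nat) = i"
  by (cases "i = 0") auto

lemma nat_mod_eq_int_mod: "(x::nat) mod n = y mod n \<longleftrightarrow> int x mod int n = int y mod int n"
  by (metis of_nat_eq_iff of_nat_mod)

lemma int_neg_add_mod: "(n - (a + b) mod n) mod n = ((n - a) mod n + (n - b mod n)) mod (n::int)"
  by (metis diff_add_eq_diff_diff_swap minus_mod_self1 mod_add_eq mod_add_left_eq mod_minus_cong
      mod_mod_trivial uminus_add_conv_diff)

lemma int_diff_mod_dvd: "(m::int) dvd n \<Longrightarrow> (n - a) mod m = (m - a mod m) mod m"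
  by (metis diff_0 dvd_imp_mod_0 minus_mod_self1 mod_diff_left_eq mod_diff_right_eq)

lemma all_less_mod_iff:
  fixes m n :: nat
  assumes "0 < m" "m \<le> n"
  shows "(\<forall>i<n. P (i mod m)) \<longleftrightarrow> (\<forall>j<m. P j)"
  using assms by (metis less_le_trans mod_less mod_less_divisor)

lemma Xn_subset: "X \<in> Xn n \<Longrightarrow> X \<subseteq> {..<n}"
  by (simp add: Xn_def)

definition rot :: "nat \<Rightarrow> nat \<Rightarrow> nat set \<Rightarrow> nat set" where
  "rot n k X = (\<lambda>i. (i + k) mod n) ` X"

definition reflect :: "nat \<Rightarrow> nat set \<Rightarrow> nat set" where
  "reflect n X = (\<lambda>i. (n - i) mod n) ` X"

definition rot_orbit :: "nat \<Rightarrow> nat set \<Rightarrow> nat set set" where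
  "rot_orbit n X = range (\<lambda>k. rot n k X)"

lemma rot_rot: "rot n a (rot n b X) = rot n (a + b) X"
  unfolding rot_def image_image by (simp add: mod_add_left_eq add.assoc add.commute[of a b])

lemma rot_mod: "rot n (k mod n) X = rot n k X"
  unfolding rot_def by (simp add: mod_add_right_eq)

lemma rot_0: "X \<subseteq> {..<n} \<Longrightarrow> rot n 0 X = X"
  unfolding rot_def by (auto simp: subset_iff image_iff)

lemma rot_multiple: "X \<subseteq> {..<n} \<Longrightarrow> n dvd k \<Longrightarrow> rot n k X = X"
  by (metis dvd_eq_mod_eq_0 rot_0 rot_mod)

lemma rot_subset: "0 < n \<Longrightarrow> rot n k X \<subseteq> {..<n}"
  unfolding rot_def by auto

lemma reflect_subset: "0 < n \<Longrightarrow> reflect n X \<subseteq> {..<n}"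
  unfolding reflect_def by auto

lemma rot_inverse:
  assumes "X \<subseteq> {..<n}" "0 < n"
  shows "rot n ((n - 1) * k) (rot n k X) = X"
proof -
  have "(n - 1) * k + k = n * k" using assms(2) by (cases n) auto
  then show ?thesis by (simp add: rot_rot rot_multiple assms(1))
qed

lemma rot_cancel:
  assumes "X \<subseteq> {..<n}" "Y \<subseteq> {..<n}" "0 < n" "rot n k X = rot n k Y"
  shows "X = Y"
  by (metis assms rot_inverse)

lemma reflect_reflect: "X \<subseteq> {..<n} \<Longrightarrow> reflect n (reflect n X) = X"
  unfolding reflect_def image_image by (auto simp: subset_iff neg_neg_mod image_iff cong: image_cong)

lemma reflect_rot:
  assumes "X \<subseteq> {..<n}"
  shows "reflect n (rot n k X) = rot n (n - k mod n) (reflect n X)"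
  unfolding reflect_def rot_def image_image
proof (rule image_cong[OF refl])
  fix i assume "i \<in> X"
  then have "i < n" using assms by auto
  then have "k mod n \<le> n" "(i + k) mod n \<le> n" by (simp_all add: less_imp_le)
  then have "int (n - (i + k) mod n) = int n - (int i + int k) mod int n"
    and "int ((n - i) mod n + (n - k mod n)) = (int n - int i) mod int n + (int n - int k mod int n)"
    using \<open>i < n\<close> by (simp_all only: of_nat_add of_nat_diff of_nat_mod less_imp_le)
  moreover have "(int n - (int i + int k) mod int n) mod int n
      = ((int n - int i) mod int n + (int n - int k mod int n)) mod int n"
    by (rule int_neg_add_mod)
  ultimately show "(n - (i + k) mod n) mod n = ((n - i) mod n + (n - k mod n)) mod n"
    unfolding nat_mod_eq_int_mod by (simp only:)
qed

lemma rot_orbit_eq_image: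
  assumes "0 < n"
  shows "rot_orbit n X = (\<lambda>k. rot n k X) ` {..<n}"
  unfolding rot_orbit_def
proof (intro subset_antisym image_subsetI)
  fix k
  have "rot n k X = rot n (k mod n) X" by (simp add: rot_mod)
  then show "rot n k X \<in> (\<lambda>k. rot n k X) ` {..<n}" using assms by auto
qed auto

lemma finite_rot_orbit: "0 < n \<Longrightarrow> finite (rot_orbit n X)"
  by (simp add: rot_orbit_eq_image)

lemma rot_orbit_subset_of_mem:
  assumes "Y \<in> rot_orbit n X"
  shows "rot_orbit n Y \<subseteq> rot_orbit n X"
  using assms by (auto simp: rot_orbit_def rot_rot)

lemma rot_orbit_eq_of_mem:
  assumes "Y \<in> rot_orbit n X" "X \<subseteq> {..<n}" "0 < n"
  shows "rot_orbit n Y = rot_orbit n X"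
proof
  obtain k where Y: "Y = rot n k X" using assms(1) by (auto simp: rot_orbit_def)
  have "X \<in> rot_orbit n Y" unfolding Y rot_orbit_def using rot_inverse[OF assms(2,3)] by (metis rangeI)
  then show "rot_orbit n X \<subseteq> rot_orbit n Y" by (rule rot_orbit_subset_of_mem)
qed (rule rot_orbit_subset_of_mem[OF assms(1)])

lemma rot_fixed_mult:
  assumes "X \<subseteq> {..<n}" "rot n a X = X"
  shows "rot n (a * q) X = X"
proof (induction q)
  case 0
  then show ?case by (simp add: rot_0 assms(1))
next
  case (Suc q)
  then show ?case by (metis assms(2) mult_Suc_right rot_rot)
qed

definition min_period :: "nat \<Rightarrow> nat set \<Rightarrow> nat" where
  "min_period n X = (LEAST k. 0 < k \<and> rot n k X = X)"

lemma min_period: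
  assumes "X \<subseteq> {..<n}" "0 < n"
  shows min_period_pos: "0 < min_period n X" and rot_min_period: "rot n (min_period n X) X = X"
proof -
  have "0 < n \<and> rot n n X = X" using assms by (simp add: rot_multiple)
  then have "0 < min_period n X \<and> rot n (min_period n X) X = X"
    unfolding min_period_def by (rule LeastI)
  then show "0 < min_period n X" "rot n (min_period n X) X = X" by auto
qed

lemma rot_fixed_iff_min_period_dvd:
  assumes "X \<subseteq> {..<n}" "0 < n"
  shows "rot n k X = X \<longleftrightarrow> min_period n X dvd k"
proof
  let ?r = "min_period n X"
  assume fixed: "rot n k X = X"
  have "rot n (k mod ?r) X = rot n (k mod ?r) (rot n (?r * (k div ?r)) X)"
    using rot_fixed_mult[OF assms(1) rot_min_period[OF assms]] by simp
  also have "\<dots> = X" using fixed by (simp add: rot_rot)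
  finally have "rot n (k mod ?r) X = X" .
  moreover have "k mod ?r < ?r" using min_period_pos[OF assms] by simp
  then have "\<not> (0 < k mod ?r \<and> rot n (k mod ?r) X = X)"
    unfolding min_period_def by (rule not_less_Least)
  ultimately show "?r dvd k" by (simp add: dvd_eq_mod_eq_0)
next
  assume "min_period n X dvd k"
  then obtain q where "k = min_period n X * q" by (rule dvdE)
  then show "rot n k X = X" using rot_fixed_mult[OF assms(1) rot_min_period[OF assms]] by simp
qed

lemma min_period_dvd:
  assumes "X \<subseteq> {..<n}" "0 < n"
  shows "min_period n X dvd n"
  using rot_fixed_iff_min_period_dvd[OF assms] rot_multiple[OF assms(1) dvd_refl] by simp

lemma card_rot_orbit:
  assumes "X \<subseteq> {..<n}" "0 < n"
  shows "card (rot_orbit n X) = min_period n X"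
proof -
  let ?r = "min_period n X"
  have "rot_orbit n X = (\<lambda>k. rot n k X) ` {..<?r}"
    unfolding rot_orbit_def
  proof (intro subset_antisym image_subsetI)
    fix k
    have "rot n k X = rot n (k mod ?r) (rot n (?r * (k div ?r)) X)" by (simp add: rot_rot)
    also have "\<dots> = rot n (k mod ?r) X"
      using rot_fixed_mult[OF assms(1) rot_min_period[OF assms]] by simp
    finally show "rot n k X \<in> (\<lambda>k. rot n k X) ` {..<?r}"
      using min_period_pos[OF assms] by auto
  qed auto
  moreover have "inj_on (\<lambda>k. rot n k X) {..<?r}"
  proof (rule linorder_inj_onI')
    fix i j assume ij: "i \<in> {..<?r}" "j \<in> {..<?r}" "i < j"
    show "rot n i X \<noteq> rot n j X"
    proof
      assume "rot n i X = rot n j X"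
      then have "rot n i (rot n (j - i) X) = rot n i X" using ij(3) by (simp add: rot_rot)
      then have "rot n (j - i) X = X" by (rule rot_cancel[OF rot_subset[OF assms(2)] assms])
      then have "?r dvd j - i" using rot_fixed_iff_min_period_dvd[OF assms] by blast
      moreover have "0 < j - i" "j - i < ?r" using ij by auto
      ultimately show False by (simp add: nat_dvd_not_less)
    qed
  qed
  ultimately show ?thesis by (simp add: card_image)
qed

lemma card_rot_orbit_le_reflect:
  assumes "X \<subseteq> {..<n}" "0 < n"
  shows "card (rot_orbit n X) \<le> card (rot_orbit n (reflect n X))"
proof (rule card_inj_on_le)
  show "inj_on (reflect n) (rot_orbit n X)"
    by (rule inj_on_inverseI[where g = "reflect n"])
      (auto simp: rot_orbit_def reflect_reflect rot_subset assms(2))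
  show "reflect n ` rot_orbit n X \<subseteq> rot_orbit n (reflect n X)"
    by (auto simp: rot_orbit_def reflect_rot assms(1))
  show "finite (rot_orbit n (reflect n X))" by (rule finite_rot_orbit[OF assms(2)])
qed

lemma card_rot_orbit_reflect:
  assumes "X \<subseteq> {..<n}" "0 < n"
  shows "card (rot_orbit n (reflect n X)) = card (rot_orbit n X)"
  using card_rot_orbit_le_reflect[OF assms] card_rot_orbit_le_reflect[of "reflect n X" n]
  by (simp add: reflect_reflect reflect_subset assms)

lemma dih_orbit_subset_Pow: "0 < n \<Longrightarrow> dih_orbit n X \<subseteq> Pow {..<n}"
  by (auto simp: dih_orbit_def dih_act_def)

lemma dih_orbit_eq_rot_orbits:
  assumes "X \<subseteq> {..<n}" "0 < n"
  shows "dih_orbit n X = rot_orbit n X \<union> rot_orbit n (reflect n X)"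
proof -
  have "dih_act n (k, False) X = rot n k X" for k
    by (simp add: dih_act_def rot_def)
  moreover have "dih_act n (k, True) X = rot n k (reflect n X)" for k
    unfolding dih_act_def rot_def reflect_def image_image
  proof (rule image_cong[OF refl])
    fix i assume "i \<in> X"
    then have "i < n" using assms(1) by auto
    then have "(k + n - i) mod n = ((n - i) mod n + k) mod n"
      by (metis Nat.add_diff_assoc less_imp_le add.commute mod_add_left_eq)
    then show "(if snd (k, True) then (fst (k, True) + n - i) mod n else (i + fst (k, True)) mod n)
        = ((n - i) mod n + k) mod n"
      by simp
  qed
  moreover have "dih n = (\<lambda>k. (k, False)) ` {..<n} \<union> (\<lambda>k. (k, True)) ` {..<n}"
    by (auto simp: dih_def image_iff)
  ultimately show ?thesis
    unfolding dih_orbit_def rot_orbit_eq_image[OF assms(2)] by (simp only: image_Un image_image)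
qed

lemma card_dih_orbit_cases:
  assumes "X \<subseteq> {..<n}" "0 < n"
  shows "card (dih_orbit n X) = min_period n X \<or> card (dih_orbit n X) = 2 * min_period n X"
proof (cases "rot_orbit n X \<inter> rot_orbit n (reflect n X) = {}")
  case True
  have "card (dih_orbit n X) = card (rot_orbit n X) + card (rot_orbit n (reflect n X))"
    unfolding dih_orbit_eq_rot_orbits[OF assms]
    by (rule card_Un_disjoint[OF finite_rot_orbit[OF assms(2)] finite_rot_orbit[OF assms(2)] True])
  then show ?thesis by (simp add: card_rot_orbit_reflect card_rot_orbit assms)
next
  case False
  then obtain Y where "Y \<in> rot_orbit n X" "Y \<in> rot_orbit n (reflect n X)" by blast
  then have "rot_orbit n (reflect n X) = rot_orbit n X"
    using rot_orbit_eq_of_mem assms reflect_subset by metis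
  then have "dih_orbit n X = rot_orbit n X" by (simp add: dih_orbit_eq_rot_orbits assms)
  then show ?thesis by (simp add: card_rot_orbit assms)
qed

lemma rot_card_dih_orbit:
  assumes "X \<subseteq> {..<n}" "0 < n"
  shows "rot n (card (dih_orbit n X)) X = X"
  using card_dih_orbit_cases[OF assms] rot_fixed_iff_min_period_dvd[OF assms] by auto

lemma rot_fixed_of_card_dih_orbit_odd:
  assumes "X \<subseteq> {..<n}" "0 < n" "n = d * m" "odd d" "card (dih_orbit n X) = 2 * m"
  shows "rot n m X = X"
proof -
  have "min_period n X \<noteq> 2 * m"
  proof
    assume "min_period n X = 2 * m"
    then have "2 * m dvd d * m" using min_period_dvd[OF assms(1,2)] assms(3) by simp
    then show False using assms(2-4) by auto
  qed
  then have "min_period n X = m" using card_dih_orbit_cases[OF assms(1,2)] assms(5) by auto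
  then show ?thesis using rot_min_period[OF assms(1,2)] by simp
qed

definition periodic_lift :: "nat \<Rightarrow> nat \<Rightarrow> nat set \<Rightarrow> nat set" where
  "periodic_lift n m A = {i. i < n \<and> i mod m \<in> A}"

lemma periodic_lift_subset: "periodic_lift n m A \<subseteq> {..<n}"
  by (auto simp: periodic_lift_def)

lemma rot_periodic_lift_subset:
  assumes "m dvd n" "0 < n"
  shows "rot n k (periodic_lift n m A) \<subseteq> periodic_lift n m (rot m k A)"
proof
  fix x assume "x \<in> rot n k (periodic_lift n m A)"
  then obtain i where "x = (i + k) mod n" "i mod m \<in> A" by (auto simp: rot_def periodic_lift_def)
  moreover have "(i + k) mod n mod m = (i mod m + k) mod m"
    using assms(1) by (simp add: mod_mod_cancel mod_add_left_eq)
  ultimately show "x \<in> periodic_lift n m (rot m k A)"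
    using assms(2) by (auto simp: rot_def periodic_lift_def)
qed

lemma rot_periodic_lift:
  assumes "m dvd n" "0 < n" "A \<subseteq> {..<m}"
  shows "rot n k (periodic_lift n m A) = periodic_lift n m (rot m k A)"
proof
  \<comment> \<open>The reverse inclusion is the forward one for the inverse rotation by \<open>(n - 1) * k\<close>.\<close>
  let ?j = "(n - 1) * k"
  have "k + ?j = n * k" using assms(2) by (cases n) auto
  then have "periodic_lift n m (rot m k A) = rot n k (rot n ?j (periodic_lift n m (rot m k A)))"
    by (simp add: rot_rot rot_multiple periodic_lift_subset)
  also have "\<dots> \<subseteq> rot n k (periodic_lift n m (rot m ?j (rot m k A)))"
    using rot_periodic_lift_subset[OF assms(1,2)] by (simp add: rot_def image_mono)
  also have "rot m ?j (rot m k A) = A"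
    using \<open>k + ?j = n * k\<close> assms(1,3) by (simp add: rot_rot rot_multiple add.commute)
  finally show "periodic_lift n m (rot m k A) \<subseteq> rot n k (periodic_lift n m A)" .
qed (rule rot_periodic_lift_subset[OF assms(1,2)])

lemma reflect_periodic_lift_subset:
  assumes "m dvd n" "0 < m"
  shows "reflect n (periodic_lift n m A) \<subseteq> periodic_lift n m (reflect m A)"
proof
  fix x assume "x \<in> reflect n (periodic_lift n m A)"
  then obtain i where i: "x = (n - i) mod n" "i mod m \<in> A" "i < n"
    by (auto simp: reflect_def periodic_lift_def)
  have "int ((n - i) mod n mod m) = (int n - int i) mod int m"
    using assms(1) i(3) by (simp add: mod_mod_cancel of_nat_mod of_nat_diff)
  also have "\<dots> = (int m - int i mod int m) mod int m"
    using assms(1) by (simp add: int_diff_mod_dvd)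
  also have "\<dots> = int ((m - i mod m) mod m)"
    using assms(2) by (simp add: of_nat_mod of_nat_diff less_imp_le)
  finally have "x mod m = (m - i mod m) mod m" using i(1) by (simp only: of_nat_eq_iff)
  then show "x \<in> periodic_lift n m (reflect m A)"
    using i by (auto simp: reflect_def periodic_lift_def)
qed

lemma reflect_periodic_lift:
  assumes "m dvd n" "0 < m" "A \<subseteq> {..<m}"
  shows "reflect n (periodic_lift n m A) = periodic_lift n m (reflect m A)"
proof
  have "periodic_lift n m (reflect m A) = reflect n (reflect n (periodic_lift n m (reflect m A)))"
    by (simp add: reflect_reflect periodic_lift_subset)
  also have "\<dots> \<subseteq> reflect n (periodic_lift n m (reflect m (reflect m A)))"
    using reflect_periodic_lift_subset[OF assms(1,2)] by (simp add: reflect_def image_mono)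
  also have "\<dots> = reflect n (periodic_lift n m A)" by (simp add: reflect_reflect assms(3))
  finally show "periodic_lift n m (reflect m A) \<subseteq> reflect n (periodic_lift n m A)" .
qed (rule reflect_periodic_lift_subset[OF assms(1,2)])

lemma dih_orbit_periodic_lift:
  assumes "m dvd n" "0 < m" "0 < n" "A \<subseteq> {..<m}"
  shows "dih_orbit n (periodic_lift n m A) = periodic_lift n m ` dih_orbit m A"
proof -
  have "rot_orbit n (periodic_lift n m B) = periodic_lift n m ` rot_orbit m B"
    if "B \<subseteq> {..<m}" for B
    unfolding rot_orbit_def image_image by (simp add: rot_periodic_lift assms(1,3) that)
  then show ?thesis
    by (simp add: dih_orbit_eq_rot_orbits periodic_lift_subset reflect_periodic_lift reflect_subset
        image_Un assms)
qed

lemma inj_on_periodic_lift: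
  assumes "m \<le> n"
  shows "inj_on (periodic_lift n m) (Pow {..<m})"
proof (rule inj_on_inverseI)
  fix A assume "A \<in> Pow {..<m}"
  then show "periodic_lift n m A \<inter> {..<m} = A" using assms by (auto simp: periodic_lift_def)
qed

lemma periodic_lift_in_Xn:
  assumes "0 < m" "m dvd n" "0 < n" "A \<subseteq> {..<m}"
  shows "periodic_lift n m A \<in> Xn n \<longleftrightarrow> A \<in> Xn m"
proof -
  let ?L = "periodic_lift n m A"
  have "m \<le> n" using assms(2,3) by (simp add: dvd_imp_le)
  note all_mod = all_less_mod_iff[OF assms(1) this]
  have shift: "(i + c) mod n \<in> ?L \<longleftrightarrow> (i mod m + c) mod m \<in> A" for i c
    using assms(2,3) by (simp add: periodic_lift_def mod_mod_cancel mod_add_left_eq)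
  have "(\<forall>i<n. \<not> (i \<in> ?L \<and> (i + 1) mod n \<in> ?L))
      \<longleftrightarrow> (\<forall>i<n. \<not> (i mod m \<in> A \<and> (i mod m + 1) mod m \<in> A))"
    by (simp only: shift) (auto simp: periodic_lift_def)
  also have "\<dots> \<longleftrightarrow> (\<forall>j<m. \<not> (j \<in> A \<and> (j + 1) mod m \<in> A))"
    by (rule all_mod)
  finally have independent:
    "(\<forall>i<n. \<not> (i \<in> ?L \<and> (i + 1) mod n \<in> ?L))
      \<longleftrightarrow> (\<forall>j<m. \<not> (j \<in> A \<and> (j + 1) mod m \<in> A))" .
  have "(\<forall>i<n. i \<in> ?L \<or> (i + 1) mod n \<in> ?L \<or> (i + 2) mod n \<in> ?L)
      \<longleftrightarrow> (\<forall>i<n. i mod m \<in> A \<or> (i mod m + 1) mod m \<in> A \<or> (i mod m + 2) mod m \<in> A)"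
    by (simp only: shift) (auto simp: periodic_lift_def)
  also have "\<dots> \<longleftrightarrow> (\<forall>j<m. j \<in> A \<or> (j + 1) mod m \<in> A \<or> (j + 2) mod m \<in> A)"
    by (rule all_mod)
  finally have maximal:
    "(\<forall>i<n. i \<in> ?L \<or> (i + 1) mod n \<in> ?L \<or> (i + 2) mod n \<in> ?L)
      \<longleftrightarrow> (\<forall>j<m. j \<in> A \<or> (j + 1) mod m \<in> A \<or> (j + 2) mod m \<in> A)" .
  show ?thesis
    unfolding Xn_def mem_Collect_eq independent maximal using periodic_lift_subset assms(4) by blast
qed

lemma periodic_lift_restrict:
  assumes "0 < m" "m dvd n" "X \<subseteq> {..<n}" "rot n m X = X"
  shows "periodic_lift n m (X \<inter> {..<m}) = X"
proof -
  obtain p where n: "n = m * p" using assms(2) by (rule dvdE)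
  have closed: "(i + m * q) mod n \<in> X" if "i \<in> X" for i q
    using that rot_fixed_mult[OF assms(3,4), of q] by (auto simp: rot_def)
  have "i \<in> X \<longleftrightarrow> i mod m \<in> X" if "i < n" for i
  proof
    assume "i mod m \<in> X"
    then show "i \<in> X" using closed[of "i mod m" "i div m"] that by simp
  next
    assume "i \<in> X"
    have "i div m < p" using that n by (simp add: div_less_iff_less_mult mult.commute assms(1))
    then have "i + m * (p - i div m) = i + m * p - m * (i div m)"
      by (simp add: diff_mult_distrib2)
    then have "i + m * (p - i div m) = i mod m + n"
      using n mult_div_mod_eq[of m i] by linarith
    moreover have "i mod m < n"
      using that by (meson le_less_trans mod_less_eq_dividend)
    ultimately show "i mod m \<in> X" using closed[OF \<open>i \<in> X\<close>, of "p - i div m"] by simp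
  qed
  then show ?thesis using assms(1,3) by (auto simp: periodic_lift_def)
qed

lemma card_image_periodic_lift:
  assumes "m \<le> n" "Y \<subseteq> Pow {..<m}"
  shows "card (periodic_lift n m ` Y) = card Y"
  by (rule card_image[OF inj_on_subset[OF inj_on_periodic_lift[OF assms(1)] assms(2)]])

lemma image_periodic_lift_orbits:
  assumes "0 < m" "m dvd n" "0 < n"
    and periodic: "\<And>X. X \<in> Xn n \<Longrightarrow> card (dih_orbit n X) = c \<Longrightarrow> rot n m X = X"
  shows "image (periodic_lift n m) ` {Y \<in> orbits m. card Y = c} = {Y \<in> orbits n. card Y = c}"
    (is "?lift ` _ = _")
proof (intro equalityI subsetI)
  fix Z assume "Z \<in> ?lift ` {Y \<in> orbits m. card Y = c}"
  then obtain A where A: "A \<in> Xn m" "Z = ?lift (dih_orbit m A)" "card (dih_orbit m A) = c"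
    by (auto simp: orbits_def)
  have "Z = dih_orbit n (periodic_lift n m A)" "periodic_lift n m A \<in> Xn n"
    using A dih_orbit_periodic_lift periodic_lift_in_Xn Xn_subset assms(1-3) by auto
  moreover have "card Z = c"
    using A card_image_periodic_lift[OF dvd_imp_le[OF assms(2,3)] dih_orbit_subset_Pow[OF assms(1)]] by simp
  ultimately show "Z \<in> {Y \<in> orbits n. card Y = c}" by (auto simp: orbits_def)
next
  fix Z assume "Z \<in> {Y \<in> orbits n. card Y = c}"
  then obtain X where X: "X \<in> Xn n" "Z = dih_orbit n X" "card Z = c" by (auto simp: orbits_def)
  define A where "A = X \<inter> {..<m}"
  have "rot n m X = X" using periodic X by simp
  then have "periodic_lift n m A = X"
    unfolding A_def by (rule periodic_lift_restrict[OF assms(1,2) Xn_subset[OF X(1)]])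
  moreover have "A \<subseteq> {..<m}" by (simp add: A_def)
  ultimately have "A \<in> Xn m" "Z = ?lift (dih_orbit m A)"
    using periodic_lift_in_Xn dih_orbit_periodic_lift X(1,2) assms(1-3) by metis+
  moreover have "card (dih_orbit m A) = c"
    using calculation(2) X(3) card_image_periodic_lift[OF dvd_imp_le[OF assms(2,3)] dih_orbit_subset_Pow[OF assms(1)]]
    by simp
  ultimately show "Z \<in> ?lift ` {Y \<in> orbits m. card Y = c}" by (auto simp: orbits_def)
qed

lemma card_orbits_eq_if_periodic:
  assumes "0 < m" "m dvd n" "0 < n"
    and periodic: "\<And>X. X \<in> Xn n \<Longrightarrow> card (dih_orbit n X) = c \<Longrightarrow> rot n m X = X"
  shows "card {Y \<in> orbits n. card Y = c} = card {Y \<in> orbits m. card Y = c}"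
proof -
  have "{Y \<in> orbits m. card Y = c} \<subseteq> Pow (Pow {..<m})"
    using dih_orbit_subset_Pow[OF assms(1)] by (auto simp: orbits_def)
  then have "inj_on (image (periodic_lift n m)) {Y \<in> orbits m. card Y = c}"
    by (rule inj_on_subset[OF inj_on_image_Pow[OF inj_on_periodic_lift[OF dvd_imp_le[OF assms(2,3)]]]])
  then show ?thesis by (simp add: card_image image_periodic_lift_orbits[OF assms, symmetric])
qed

lemma orb_odd:
  assumes "0 < m" "odd d"
  shows "orb d (d * m) = orb 1 m"
proof -
  have "0 < d * m" using assms by (auto intro: gr0I)
  have "orb d (d * m) = card {Y \<in> orbits (d * m). card Y = 2 * m}"
    unfolding orb_def using \<open>0 < d * m\<close> by simp
  also have "\<dots> = card {Y \<in> orbits m. card Y = 2 * m}"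
  proof (rule card_orbits_eq_if_periodic[OF assms(1) _ \<open>0 < d * m\<close>])
    fix X assume X: "X \<in> Xn (d * m)" and card: "card (dih_orbit (d * m) X) = 2 * m"
    show "rot (d * m) m X = X"
      by (rule rot_fixed_of_card_dih_orbit_odd[OF Xn_subset[OF X] \<open>0 < d * m\<close> refl assms(2) card])
  qed simp
  also have "\<dots> = orb 1 m" by (simp add: orb_def)
  finally show ?thesis .
qed

lemma orb_even:
  assumes "0 < m" "0 < e"
  shows "orb (2 * e) (e * m) = orb 2 m"
proof -
  have "0 < e * m" using assms by simp
  have "orb (2 * e) (e * m) = card {Y \<in> orbits (e * m). card Y = m}"
    unfolding orb_def using assms(2) by simp
  also have "\<dots> = card {Y \<in> orbits m. card Y = m}"
  proof (rule card_orbits_eq_if_periodic[OF assms(1) _ \<open>0 < e * m\<close>])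
    fix X assume X: "X \<in> Xn (e * m)" and card: "card (dih_orbit (e * m) X) = m"
    show "rot (e * m) m X = X"
      using rot_card_dih_orbit[OF Xn_subset[OF X] \<open>0 < e * m\<close>] card by simp
  qed simp
  also have "\<dots> = orb 2 m" by (simp add: orb_def)
  finally show ?thesis .
qed

theorem proposition2p4:
  fixes n d :: nat
  assumes "n \<ge> 1" and "d dvd 2 * n"
  shows "orb d n = (if odd d then orb 1 (n div d) else orb 2 (2 * n div d))"
proof (cases "odd d")
  case True
  then have "d dvd n" using assms(2) by (simp add: coprime_dvd_mult_right_iff)
  then obtain m where n: "n = d * m" by (rule dvdE)
  then show ?thesis using orb_odd[of m d] True assms(1) by auto
next
  case False
  then obtain e where d: "d = 2 * e" by (auto elim: evenE)
  then obtain m where n: "n = e * m" using assms(2) by (auto elim: dvdE)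
  then show ?thesis using orb_even[of m e] False assms(1) d by auto
qed

end
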